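(* Let $\mathcal{L}=(\mathrm{Fm},\vdash)$ be a selfextensional logic, $N\subseteq\mathrm{Fm}\times\mathrm{Fm}$ a normative system, $P\subseteq P_N$ a conditional permission system, and $(\mathrm{X})\in\{(\top),(\mathrm{SI}),(\mathrm{WO})\}$. Then: 1. $S^{(\mathrm{AND})}(P,N)$ is closed under $(\mathrm{AND})^{\downarrow}$. 2. $S^{(\mathrm{OR})}(P,N)$ is closed under $(\mathrm{OR})^{\downarrow}$. 3. If $N^{(\mathrm{CT})}$ and $N^{(\mathrm{CT})}_{(\beta,\gamma)}$ are closed under (AND) for every $(\beta,\gamma)\in P$, then $S^{(\mathrm{CT})}(P,N)$ is closed under $(\mathrm{CT})^{\downarrow}$. 4. $S^{(\mathrm{X})}(P,N)$ is closed under (X). 5. For $1\le i\le4$, if $S^i(P,N)$ is closed under (SI) and $(\mathrm{CT})^{\downarrow}$, then $S^i(P,N)$ is closed under $(\mathrm{AND})^{\downarrow}$.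
   Context: $Cn(\Gamma)=\{\psi\mid\Gamma\vdash\psi\}$, $Cn(\varphi,\psi)=Cn(\{\varphi,\psi\})$. Standing convention: rules mentioning $\wedge,\vee,\top$ are considered only for logics having a term $\wedge$ with $Cn(\varphi\wedge\psi)=Cn(\{\varphi,\psi\})$, a term $\vee$ with $Cn(\varphi\vee\psi)=Cn(\varphi)\cap Cn(\psi)$, a constant $\top$ with $\top\in Cn(\varphi)$ for all $\varphi$, respectively. Rules on a relation $R\subseteq\mathrm{Fm}\times\mathrm{Fm}$: $(\top)$: $(\top,\top)\in R$; (SI): $(\alpha,\varphi)\in R,\beta\vdash\alpha\Rightarrow(\beta,\varphi)\in R$; (WO): $(\alpha,\varphi)\in R,\varphi\vdash\psi\Rightarrow(\alpha,\psi)\in R$; (AND): $(\alpha,\varphi),(\alpha,\psi)\in R\Rightarrow(\alpha,\varphi\wedge\psi)\in R$; (OR): $(\alpha,\varphi),(\beta,\varphi)\in R\Rightarrow(\alpha\vee\beta,\varphi)\in R$; (CT): $(\alpha,\varphi),(\alpha\wedge\varphi,\psi)\in R\Rightarrow(\alpha,\psi)\in R$. Rules relating $R$ to $N$: $(\mathrm{AND})^{\downarrow}$: $(\alpha,\varphi)\in N,(\alpha,\psi)\in R\Rightarrow(\alpha,\varphi\wedge\psi)\in R$; $(\mathrm{OR})^{\downarrow}$: $(\alpha,\varphi)\in N,(\beta,\varphi)\in R\Rightarrow(\alpha\vee\beta,\varphi)\in R$; $(\mathrm{CT})^{\downarrow}$: $(\alpha,\varphi)\in N,(\alpha\wedge\varphi,\psi)\in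 R\Rightarrow(\alpha,\varphi\wedge\psi)\in R$. $N^{(\mathrm{R})}$ is the smallest extension of $N$ closed under the single rule (R); $N^{(\mathrm{R})}_{(\alpha,\varphi)}$ the smallest extension of $N\cup\{(\alpha,\varphi)\}$ closed under (R); $N^i$, $N^i_{(\alpha,\varphi)}$ the same for the rule sets $i=1$: $(\top)$,(SI),(WO),(AND); $i=2$: plus (OR); $i=3$: $(\top)$,(SI),(WO),(AND),(CT); $i=4$: all six. $S^{(\mathrm{R})}(P,N)=\bigcup\{N^{(\mathrm{R})}_{(\alpha,\varphi)}\mid(\alpha,\varphi)\in P\}$ if $P\neq\varnothing$, and $N^{(\mathrm{R})}$ if $P=\varnothing$; $S^i(P,N)$ analogously with $N^i$. $P_N=\{(\alpha,\varphi)\mid\forall\psi((\alpha,\psi)\in N\Rightarrow Cn(\varphi,\psi)\neq\mathrm{Fm})\}$. *)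

theory Defs
  imports Main
begin

datatype ('v, 'c) fm = Var 'v | Op 'c "('v, 'c) fm list"

primrec subst :: "('v \<Rightarrow> ('v, 'c) fm) \<Rightarrow> ('v, 'c) fm \<Rightarrow> ('v, 'c) fm" where
  "subst \<sigma> (Var v) = \<sigma> v"
| "subst \<sigma> (Op c xs) = Op c (map (subst \<sigma>) xs)"

primrec vars :: "('v, 'c) fm \<Rightarrow> 'v set" where
  "vars (Var v) = {v}"
| "vars (Op c xs) = \<Union> (set (map vars xs))"

type_synonym ('v, 'c) cr = "('v, 'c) fm set \<Rightarrow> ('v, 'c) fm \<Rightarrow> bool"
type_synonym ('v, 'c) frel = "(('v, 'c) fm \<times> ('v, 'c) fm) set"

definition logic :: "('v, 'c) cr \<Rightarrow> bool" where
  "logic der \<longleftrightarrow>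
     (\<forall>\<Gamma> \<phi>. \<phi> \<in> \<Gamma> \<longrightarrow> der \<Gamma> \<phi>) \<and>
     (\<forall>\<Gamma> \<Delta> \<phi>. \<Gamma> \<subseteq> \<Delta> \<longrightarrow> der \<Gamma> \<phi> \<longrightarrow> der \<Delta> \<phi>) \<and>
     (\<forall>\<Gamma> \<Delta> \<phi>. (\<forall>\<psi>\<in>\<Delta>. der \<Gamma> \<psi>) \<longrightarrow> der (\<Gamma> \<union> \<Delta>) \<phi> \<longrightarrow> der \<Gamma> \<phi>) \<and>
     (\<forall>\<Gamma> \<phi> \<sigma>. der \<Gamma> \<phi> \<longrightarrow> der (subst \<sigma> ` \<Gamma>) (subst \<sigma> \<phi>))"

definition Cn :: "('v, 'c) cr \<Rightarrow> ('v, 'c) fm set \<Rightarrow> ('v, 'c) fm set" where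
  "Cn der \<Gamma> = {\<psi>. der \<Gamma> \<psi>}"

definition selfextensional :: "('v, 'c) cr \<Rightarrow> bool" where
  "selfextensional der \<longleftrightarrow>
     (\<forall>c xs ys. list_all2 (\<lambda>x y. der {x} y \<and> der {y} x) xs ys
        \<longrightarrow> der {Op c xs} (Op c ys) \<and> der {Op c ys} (Op c xs))"

definition is_binary_term :: "(('v, 'c) fm \<Rightarrow> ('v, 'c) fm \<Rightarrow> ('v, 'c) fm) \<Rightarrow> bool" where
  "is_binary_term f \<longleftrightarrow> (\<exists>t p q. p \<noteq> q \<and> vars t \<subseteq> {p, q} \<and>
     (\<forall>\<phi> \<psi>. f \<phi> \<psi> = subst ((Var(p := \<phi>))(q := \<psi>)) t))"

definition has_conj :: "('v, 'c) cr \<Rightarrow> (('v, 'c) fm \<Rightarrow> ('v, 'c) fm \<Rightarrow> ('v, 'c) fm) \<Rightarrow> bool" where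
  "has_conj der cj \<longleftrightarrow> is_binary_term cj \<and>
     (\<forall>\<phi> \<psi>. Cn der {cj \<phi> \<psi>} = Cn der {\<phi>, \<psi>})"

definition has_disj :: "('v, 'c) cr \<Rightarrow> (('v, 'c) fm \<Rightarrow> ('v, 'c) fm \<Rightarrow> ('v, 'c) fm) \<Rightarrow> bool" where
  "has_disj der dj \<longleftrightarrow> is_binary_term dj \<and>
     (\<forall>\<phi> \<psi>. Cn der {dj \<phi> \<psi>} = Cn der {\<phi>} \<inter> Cn der {\<psi>})"

definition has_top :: "('v, 'c) cr \<Rightarrow> ('v, 'c) fm \<Rightarrow> bool" where
  "has_top der tp \<longleftrightarrow> vars tp = {} \<and> (\<forall>\<phi>. tp \<in> Cn der {\<phi>})"

definition rTop :: "('v, 'c) fm \<Rightarrow> ('v, 'c) frel \<Rightarrow> bool" where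
  "rTop tp R \<longleftrightarrow> (tp, tp) \<in> R"

definition rSI :: "('v, 'c) cr \<Rightarrow> ('v, 'c) frel \<Rightarrow> bool" where
  "rSI der R \<longleftrightarrow> (\<forall>\<alpha> \<phi> \<beta>. (\<alpha>, \<phi>) \<in> R \<longrightarrow> der {\<beta>} \<alpha> \<longrightarrow> (\<beta>, \<phi>) \<in> R)"

definition rWO :: "('v, 'c) cr \<Rightarrow> ('v, 'c) frel \<Rightarrow> bool" where
  "rWO der R \<longleftrightarrow> (\<forall>\<alpha> \<phi> \<psi>. (\<alpha>, \<phi>) \<in> R \<longrightarrow> der {\<phi>} \<psi> \<longrightarrow> (\<alpha>, \<psi>) \<in> R)"

definition rAND :: "(('v, 'c) fm \<Rightarrow> ('v, 'c) fm \<Rightarrow> ('v, 'c) fm) \<Rightarrow> ('v, 'c) frel \<Rightarrow> bool" where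
  "rAND cj R \<longleftrightarrow> (\<forall>\<alpha> \<phi> \<psi>. (\<alpha>, \<phi>) \<in> R \<longrightarrow> (\<alpha>, \<psi>) \<in> R \<longrightarrow> (\<alpha>, cj \<phi> \<psi>) \<in> R)"

definition rOR :: "(('v, 'c) fm \<Rightarrow> ('v, 'c) fm \<Rightarrow> ('v, 'c) fm) \<Rightarrow> ('v, 'c) frel \<Rightarrow> bool" where
  "rOR dj R \<longleftrightarrow> (\<forall>\<alpha> \<beta> \<phi>. (\<alpha>, \<phi>) \<in> R \<longrightarrow> (\<beta>, \<phi>) \<in> R \<longrightarrow> (dj \<alpha> \<beta>, \<phi>) \<in> R)"

definition rCT :: "(('v, 'c) fm \<Rightarrow> ('v, 'c) fm \<Rightarrow> ('v, 'c) fm) \<Rightarrow> ('v, 'c) frel \<Rightarrow> bool" where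
  "rCT cj R \<longleftrightarrow> (\<forall>\<alpha> \<phi> \<psi>. (\<alpha>, \<phi>) \<in> R \<longrightarrow> (cj \<alpha> \<phi>, \<psi>) \<in> R \<longrightarrow> (\<alpha>, \<psi>) \<in> R)"

definition rAND_down :: "(('v, 'c) fm \<Rightarrow> ('v, 'c) fm \<Rightarrow> ('v, 'c) fm) \<Rightarrow> ('v, 'c) frel \<Rightarrow> ('v, 'c) frel \<Rightarrow> bool" where
  "rAND_down cj N R \<longleftrightarrow> (\<forall>\<alpha> \<phi> \<psi>. (\<alpha>, \<phi>) \<in> N \<longrightarrow> (\<alpha>, \<psi>) \<in> R \<longrightarrow> (\<alpha>, cj \<phi> \<psi>) \<in> R)"

definition rOR_down :: "(('v, 'c) fm \<Rightarrow> ('v, 'c) fm \<Rightarrow> ('v, 'c) fm) \<Rightarrow> ('v, 'c) frel \<Rightarrow> ('v, 'c) frel \<Rightarrow> bool" where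
  "rOR_down dj N R \<longleftrightarrow> (\<forall>\<alpha> \<beta> \<phi>. (\<alpha>, \<phi>) \<in> N \<longrightarrow> (\<beta>, \<phi>) \<in> R \<longrightarrow> (dj \<alpha> \<beta>, \<phi>) \<in> R)"

definition rCT_down :: "(('v, 'c) fm \<Rightarrow> ('v, 'c) fm \<Rightarrow> ('v, 'c) fm) \<Rightarrow> ('v, 'c) frel \<Rightarrow> ('v, 'c) frel \<Rightarrow> bool" where
  "rCT_down cj N R \<longleftrightarrow> (\<forall>\<alpha> \<phi> \<psi>. (\<alpha>, \<phi>) \<in> N \<longrightarrow> (cj \<alpha> \<phi>, \<psi>) \<in> R \<longrightarrow> (\<alpha>, cj \<phi> \<psi>) \<in> R)"

definition closure :: "(('v, 'c) frel \<Rightarrow> bool) \<Rightarrow> ('v, 'c) frel \<Rightarrow> ('v, 'c) frel" where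
  "closure cl N = \<Inter> {R. N \<subseteq> R \<and> cl R}"

definition Sys :: "(('v, 'c) frel \<Rightarrow> bool) \<Rightarrow> ('v, 'c) frel \<Rightarrow> ('v, 'c) frel \<Rightarrow> ('v, 'c) frel" where
  "Sys cl P N = (if P = {} then closure cl N else (\<Union>x\<in>P. closure cl (insert x N)))"

definition ruleset ::
  "('v, 'c) cr \<Rightarrow> (('v, 'c) fm \<Rightarrow> ('v, 'c) fm \<Rightarrow> ('v, 'c) fm) \<Rightarrow> (('v, 'c) fm \<Rightarrow> ('v, 'c) fm \<Rightarrow> ('v, 'c) fm)
     \<Rightarrow> ('v, 'c) fm \<Rightarrow> nat \<Rightarrow> ('v, 'c) frel \<Rightarrow> bool" where
  "ruleset der cj dj tp i R \<longleftrightarrow>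
     rTop tp R \<and> rSI der R \<and> rWO der R \<and> rAND cj R \<and>
     (i \<in> {2, 4} \<longrightarrow> rOR dj R) \<and> (i \<in> {3, 4} \<longrightarrow> rCT cj R)"

definition PN :: "('v, 'c) cr \<Rightarrow> ('v, 'c) frel \<Rightarrow> ('v, 'c) frel" where
  "PN der N = {(\<alpha>, \<phi>). \<forall>\<psi>. (\<alpha>, \<psi>) \<in> N \<longrightarrow> Cn der {\<phi>, \<psi>} \<noteq> UNIV}"

end

theory Submission
  imports Defs
begin

(* Each system S(P, N) is a union of closures of supersets of N.  Every rule in question has at
   most one premise ranging over the relation itself (the other premise, if any, ranges over N),
   so it survives unions of nonempty families; and a closure satisfies its rule and contains N,
   which yields the restricted rules (AND), (OR), (CT) with one premise taken from N.  For the last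
   item, alpha /\ phi |- alpha, so (SI) turns (alpha, psi) into (alpha /\ phi, psi), and (CT) with
   (alpha, phi) in N gives (alpha, phi /\ psi). *)

lemma closure_subset: "N \<subseteq> closure cl N"
  unfolding closure_def by blast

lemma closure_closed:
  assumes "\<And>F. \<forall>R\<in>F. cl R \<Longrightarrow> cl (\<Inter>F)"
  shows "cl (closure cl N)"
  unfolding closure_def by (rule assms) blast

lemma rAND_Inter: "\<forall>R\<in>F. rAND cj R \<Longrightarrow> rAND cj (\<Inter>F)"
  unfolding rAND_def by blast

lemma rOR_Inter: "\<forall>R\<in>F. rOR dj R \<Longrightarrow> rOR dj (\<Inter>F)"
  unfolding rOR_def by blast

lemma rCT_Inter: "\<forall>R\<in>F. rCT cj R \<Longrightarrow> rCT cj (\<Inter>F)"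
  unfolding rCT_def by blast

lemma rTop_Inter: "\<forall>R\<in>F. rTop tp R \<Longrightarrow> rTop tp (\<Inter>F)"
  unfolding rTop_def by blast

lemma rSI_Inter: "\<forall>R\<in>F. rSI der R \<Longrightarrow> rSI der (\<Inter>F)"
  unfolding rSI_def by blast

lemma rWO_Inter: "\<forall>R\<in>F. rWO der R \<Longrightarrow> rWO der (\<Inter>F)"
  unfolding rWO_def by blast

lemma rAND_down_Union: "\<forall>R\<in>F. rAND_down cj N R \<Longrightarrow> rAND_down cj N (\<Union>F)"
  unfolding rAND_down_def by blast

lemma rOR_down_Union: "\<forall>R\<in>F. rOR_down dj N R \<Longrightarrow> rOR_down dj N (\<Union>F)"
  unfolding rOR_down_def by blast

lemma rCT_down_Union: "\<forall>R\<in>F. rCT_down cj N R \<Longrightarrow> rCT_down cj N (\<Union>F)"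
  unfolding rCT_down_def by blast

lemma rTop_Union: "F \<noteq> {} \<Longrightarrow> \<forall>R\<in>F. rTop tp R \<Longrightarrow> rTop tp (\<Union>F)"
  unfolding rTop_def by blast

lemma rSI_Union: "\<forall>R\<in>F. rSI der R \<Longrightarrow> rSI der (\<Union>F)"
  unfolding rSI_def by blast

lemma rWO_Union: "\<forall>R\<in>F. rWO der R \<Longrightarrow> rWO der (\<Union>F)"
  unfolding rWO_def by blast

lemma rAND_down_if_rAND: "rAND cj R \<Longrightarrow> N \<subseteq> R \<Longrightarrow> rAND_down cj N R"
  unfolding rAND_def rAND_down_def by blast

lemma rOR_down_if_rOR: "rOR dj R \<Longrightarrow> N \<subseteq> R \<Longrightarrow> rOR_down dj N R"
  unfolding rOR_def rOR_down_def by blast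

lemma rCT_down_if_rCT_rAND: "rCT cj R \<Longrightarrow> rAND cj R \<Longrightarrow> N \<subseteq> R \<Longrightarrow> rCT_down cj N R"
  unfolding rCT_def rAND_def rCT_down_def by blast

lemma Sys_property_if_Union_closed:
  assumes Union: "\<And>F. F \<noteq> {} \<Longrightarrow> \<forall>R\<in>F. Q R \<Longrightarrow> Q (\<Union>F)"
    and base: "P = {} \<Longrightarrow> Q (closure cl N)"
    and extended: "\<And>x. x \<in> P \<Longrightarrow> Q (closure cl (insert x N))"
  shows "Q (Sys cl P N)"
proof (cases "P = {}")
  case True
  then show ?thesis by (simp add: Sys_def base)
next
  case False
  then have "Q (\<Union>x\<in>P. closure cl (insert x N))"
    using extended by (intro Union) auto
  with False show ?thesis by (simp add: Sys_def)
qed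

lemma Sys_rAND_down: "rAND_down cj N (Sys (rAND cj) P N)"
proof (rule Sys_property_if_Union_closed)
  have "rAND_down cj N (closure (rAND cj) M)" if "N \<subseteq> M" for M
  proof (rule rAND_down_if_rAND)
    show "rAND cj (closure (rAND cj) M)"
      by (rule closure_closed) (rule rAND_Inter)
    show "N \<subseteq> closure (rAND cj) M"
      using that closure_subset by blast
  qed
  then show "rAND_down cj N (closure (rAND cj) N)"
    and "rAND_down cj N (closure (rAND cj) (insert x N))" for x
    by blast+
qed (rule rAND_down_Union)

lemma Sys_rOR_down: "rOR_down dj N (Sys (rOR dj) P N)"
proof (rule Sys_property_if_Union_closed)
  have "rOR_down dj N (closure (rOR dj) M)" if "N \<subseteq> M" for M
  proof (rule rOR_down_if_rOR)
    show "rOR dj (closure (rOR dj) M)"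
      by (rule closure_closed) (rule rOR_Inter)
    show "N \<subseteq> closure (rOR dj) M"
      using that closure_subset by blast
  qed
  then show "rOR_down dj N (closure (rOR dj) N)"
    and "rOR_down dj N (closure (rOR dj) (insert x N))" for x
    by blast+
qed (rule rOR_down_Union)

lemma Sys_rCT_down:
  assumes "rAND cj (closure (rCT cj) N)" and "\<forall>x\<in>P. rAND cj (closure (rCT cj) (insert x N))"
  shows "rCT_down cj N (Sys (rCT cj) P N)"
proof (rule Sys_property_if_Union_closed)
  have "rCT_down cj N (closure (rCT cj) M)" if "rAND cj (closure (rCT cj) M)" and "N \<subseteq> M" for M
  proof (rule rCT_down_if_rCT_rAND)
    show "rCT cj (closure (rCT cj) M)"
      by (rule closure_closed) (rule rCT_Inter)
    show "N \<subseteq> closure (rCT cj) M"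
      using that(2) closure_subset by blast
  qed (fact that(1))
  with assms show "rCT_down cj N (closure (rCT cj) N)"
    and "\<And>x. x \<in> P \<Longrightarrow> rCT_down cj N (closure (rCT cj) (insert x N))"
    by blast+
qed (rule rCT_down_Union)

lemma Sys_closed_if_Inter_Union_closed:
  assumes Inter: "\<And>F. \<forall>R\<in>F. cl R \<Longrightarrow> cl (\<Inter>F)"
    and Union: "\<And>F. F \<noteq> {} \<Longrightarrow> \<forall>R\<in>F. cl R \<Longrightarrow> cl (\<Union>F)"
  shows "cl (Sys cl P N)"
proof (rule Sys_property_if_Union_closed)
  have "cl (closure cl M)" for M
    using Inter by (rule closure_closed)
  then show "cl (closure cl N)" and "\<And>x. cl (closure cl (insert x N))"
    by blast+
qed (fact Union)

lemma Sys_rTop: "rTop tp (Sys (rTop tp) P N)"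
  by (rule Sys_closed_if_Inter_Union_closed) (simp_all add: rTop_Inter rTop_Union)

lemma Sys_rSI: "rSI der (Sys (rSI der) P N)"
  by (rule Sys_closed_if_Inter_Union_closed) (simp_all add: rSI_Inter rSI_Union)

lemma Sys_rWO: "rWO der (Sys (rWO der) P N)"
  by (rule Sys_closed_if_Inter_Union_closed) (simp_all add: rWO_Inter rWO_Union)

lemma conj_derives_left:
  assumes "logic der" and "has_conj der cj"
  shows "der {cj \<alpha> \<phi>} \<alpha>"
proof -
  have "der {\<alpha>, \<phi>} \<alpha>"
    using assms(1) unfolding logic_def by (simp only: insert_iff simp_thms)
  moreover have "Cn der {cj \<alpha> \<phi>} = Cn der {\<alpha>, \<phi>}"
    using assms(2) unfolding has_conj_def by blast
  ultimately show ?thesis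
    unfolding Cn_def by blast
qed

lemma rAND_down_if_rSI_rCT_down:
  assumes "logic der" and "has_conj der cj" and SI: "rSI der S" and CT_down: "rCT_down cj N S"
  shows "rAND_down cj N S"
  unfolding rAND_down_def
proof (intro allI impI)
  fix \<alpha> \<phi> \<psi>
  assume N: "(\<alpha>, \<phi>) \<in> N" and S: "(\<alpha>, \<psi>) \<in> S"
  have "(cj \<alpha> \<phi>, \<psi>) \<in> S"
    using SI S conj_derives_left[OF assms(1,2)] unfolding rSI_def by blast
  with N CT_down show "(\<alpha>, cj \<phi> \<psi>) \<in> S"
    unfolding rCT_down_def by blast
qed

theorem proposition4p13:
  fixes der :: "('v, 'c) fm set \<Rightarrow> ('v, 'c) fm \<Rightarrow> bool"
    and N P :: "(('v, 'c) fm \<times> ('v, 'c) fm) set"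
    and cj dj :: "('v, 'c) fm \<Rightarrow> ('v, 'c) fm \<Rightarrow> ('v, 'c) fm"
    and tp :: "('v, 'c) fm"
  assumes vars_inf: "infinite (UNIV :: 'v set)"
    and logic: "logic der"
    and selfext: "selfextensional der"
    and P_sub: "P \<subseteq> PN der N"
  shows
    "(has_conj der cj \<longrightarrow> rAND_down cj N (Sys (rAND cj) P N))
     \<and> (has_disj der dj \<longrightarrow> rOR_down dj N (Sys (rOR dj) P N))
     \<and> (has_conj der cj \<longrightarrow>
          rAND cj (closure (rCT cj) N) \<and> (\<forall>x\<in>P. rAND cj (closure (rCT cj) (insert x N)))
          \<longrightarrow> rCT_down cj N (Sys (rCT cj) P N))
     \<and> (has_top der tp \<longrightarrow> rTop tp (Sys (rTop tp) P N))
     \<and> rSI der (Sys (rSI der) P N)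
     \<and> rWO der (Sys (rWO der) P N)
     \<and> (\<forall>i\<in>{1..4::nat}.
          has_conj der cj \<and> has_top der tp \<and> (i \<in> {2, 4} \<longrightarrow> has_disj der dj) \<longrightarrow>
          rSI der (Sys (ruleset der cj dj tp i) P N)
          \<and> rCT_down cj N (Sys (ruleset der cj dj tp i) P N)
          \<longrightarrow> rAND_down cj N (Sys (ruleset der cj dj tp i) P N))"
  using Sys_rCT_down rAND_down_if_rSI_rCT_down[OF logic]
  by (auto simp add: Sys_rAND_down Sys_rOR_down Sys_rTop Sys_rSI Sys_rWO)

end
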